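(* For every integer $n \geq 1$, $D_n = n\left[D_{n-1} + (-1)^{n-1}\right]$, with the convention $D_0 = 0$.
   Context: A linear arrangement of $\{1,\ldots,n\}$ is a sequence $a_1\cdots a_n$ in which each of $1,\ldots,n$ appears exactly once. It contains the pattern $ij$ if $a_t=i$ and $a_{t+1}=j$ for some $t$; otherwise it avoids it. $D_n$ is the number of linear arrangements of $\{1,\ldots,n\}$ avoiding all of the patterns $12, 23, \ldots, (n-1)n, n1$; $D_0=0$. *)

theory Defs
  imports Main
begin

definition linear_arrangement :: "nat \<Rightarrow> nat list \<Rightarrow> bool" where
  "linear_arrangement n xs \<longleftrightarrow> distinct xs \<and> set xs = {1..n}"

definition contains_pattern :: "nat list \<Rightarrow> nat \<Rightarrow> nat \<Rightarrow> bool" where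
  "contains_pattern xs i j \<longleftrightarrow> (\<exists>t. Suc t < length xs \<and> xs ! t = i \<and> xs ! Suc t = j)"

definition forbidden_patterns :: "nat \<Rightarrow> (nat \<times> nat) set" where
  "forbidden_patterns n = {(i, i + 1) | i. 1 \<le> i \<and> i < n} \<union> {(n, 1)}"

definition D :: "nat \<Rightarrow> nat" where
  "D n = (if n = 0 then 0 else
     card {xs. linear_arrangement n xs \<and>
               (\<forall>(i, j) \<in> forbidden_patterns n. \<not> contains_pattern xs i j)})"

end

theory Submission
  imports Defs
begin

text \<open>
  Let \<open>V m\<close> be the arrangements of \<open>{1..m}\<close> without a cyclic succession
  \<open>i (i + 1 mod m)\<close>, so that \<open>D m = |V m|\<close>, and let \<open>L m\<close> be those without a succession
  \<open>i (i + 1)\<close> that do not end in \<open>m\<close>. Adding \<open>1 mod m\<close> to every entry maps \<open>V m\<close> into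
  itself and shifts the last entry cyclically, so all last entries are equally frequent and
  \<open>|V m|\<close> is \<open>m\<close> times the number of members ending in \<open>m\<close>; deleting that final \<open>m\<close>
  identifies these with \<open>L (m - 1)\<close>. Hence \<open>D m = m |L (m - 1)|\<close>.
  Moreover \<open>V m - L m\<close> consists of the members of \<open>V m\<close> ending in \<open>m\<close>, while every member of
  \<open>L m - V m\<close> contains \<open>m 1\<close>, and deleting \<open>m\<close> maps \<open>L m - V m\<close> bijectively onto
  \<open>V (m - 1)\<close>. Thus \<open>|L m| + |L (m - 1)| = |V m| + |V (m - 1)|\<close>, which together with
  \<open>L 1 = {}\<close> and \<open>V 1 = {[1]}\<close> gives \<open>|L m| = D m + (-1)\<^sup>m\<close>.
\<close>

lemma length_linear_arrangement:
  "linear_arrangement m xs \<Longrightarrow> length xs = m"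
  unfolding linear_arrangement_def by (metis card_atLeastAtMost diff_Suc_1 distinct_card)

lemma finite_linear_arrangements: "finite {xs. linear_arrangement m xs}"
proof (rule finite_subset)
  show "{xs. linear_arrangement m xs} \<subseteq> {xs. set xs \<subseteq> {1..m} \<and> length xs = m}"
    by (auto simp: linear_arrangement_def length_linear_arrangement)
qed (rule finite_lists_length_eq[OF finite_atLeastAtMost])

lemma last_in_linear_arrangement:
  assumes "linear_arrangement m xs" "m \<ge> 1"
  shows "last xs \<in> {1..m}"
proof -
  have "xs \<noteq> []" using assms length_linear_arrangement by fastforce
  then show ?thesis using assms(1) last_in_set by (auto simp: linear_arrangement_def)
qed

lemma linear_arrangement_one_iff: "linear_arrangement 1 xs \<longleftrightarrow> xs = [1]"
proof
  assume la: "linear_arrangement 1 xs"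
  then obtain x where "xs = [x]"
    using length_linear_arrangement[OF la] by (auto simp: length_Suc_conv)
  with la show "xs = [1]" by (simp add: linear_arrangement_def)
qed (simp add: linear_arrangement_def)

lemma linear_arrangement_insert_max:
  "linear_arrangement (Suc k) (us @ Suc k # vs) \<longleftrightarrow> linear_arrangement k (us @ vs)"
proof -
  have "insert (Suc k) (set (us @ vs)) = {1..Suc k} \<longleftrightarrow> set (us @ vs) = {1..k}"
    if "Suc k \<notin> set (us @ vs)"
    using insert_ident[OF that, of "{1..k}"] by (simp add: atLeastAtMostSuc_conv)
  then show ?thesis
    unfolding linear_arrangement_def by (auto simp: atLeastAtMostSuc_conv; force)
qed

lemma not_successively_split:
  "\<not> successively P xs \<Longrightarrow> \<exists>us x y vs. xs = us @ x # y # vs \<and> \<not> P x y"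
proof (induction P xs rule: successively.induct)
  case (3 P x y xs)
  show ?case
  proof (cases "P x y")
    case True
    with "3.prems" obtain us a b vs where "y # xs = us @ a # b # vs" "\<not> P a b"
      using "3.IH" by auto
    then show ?thesis by (metis append_Cons)
  next
    case False
    then show ?thesis by (metis append_Nil)
  qed
qed auto

lemma avoids_patterns_iff_successively:
  "(\<forall>(i, j) \<in> F. \<not> contains_pattern xs i j) \<longleftrightarrow> successively (\<lambda>a b. (a, b) \<notin> F) xs"
  by (auto simp: contains_pattern_def successively_conv_nth)

definition insert_before :: "'a \<Rightarrow> 'a \<Rightarrow> 'a list \<Rightarrow> 'a list" where
  "insert_before x y xs = concat (map (\<lambda>z. if z = y then [x, y] else [z]) xs)"

lemma insert_before_notin: "y \<notin> set xs \<Longrightarrow> insert_before x y xs = xs"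
  by (induction xs) (auto simp: insert_before_def)

lemma insert_before_split:
  "y \<notin> set us \<Longrightarrow> y \<notin> set vs \<Longrightarrow> insert_before x y (us @ y # vs) = us @ x # y # vs"
  using insert_before_notin[of y us x] insert_before_notin[of y vs x]
  by (simp add: insert_before_def)

lemma removeAll_insert_before:
  "x \<noteq> y \<Longrightarrow> removeAll x (insert_before x y xs) = removeAll x xs"
  by (induction xs) (auto simp: insert_before_def)

definition cyc_succ :: "nat \<Rightarrow> nat \<Rightarrow> nat" where
  "cyc_succ m i = (if i = m then 1 else Suc i)"

lemma inj_on_cyc_succ: "inj_on (cyc_succ m) {1..m}"
  by (auto simp: inj_on_def cyc_succ_def split: if_splits)

lemma cyc_succ_image: "m \<ge> 1 \<Longrightarrow> cyc_succ m ` {1..m} = {1..m}"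
  by (intro endo_inj_surj inj_on_cyc_succ) (auto simp: cyc_succ_def)

definition no_succession :: "nat list \<Rightarrow> bool" where
  "no_succession = successively (\<lambda>i j. j \<noteq> Suc i)"

definition no_cyclic_succession :: "nat \<Rightarrow> nat list \<Rightarrow> bool" where
  "no_cyclic_succession m = successively (\<lambda>i j. j \<noteq> cyc_succ m i)"

lemma no_cyclic_succession_imp_no_succession:
  "no_cyclic_succession m xs \<Longrightarrow> set xs \<subseteq> {1..m} \<Longrightarrow> no_succession xs"
  unfolding no_cyclic_succession_def no_succession_def
  by (erule successively_mono) (auto simp: cyc_succ_def split: if_splits)

lemma no_cyclic_succession_iff_if_max_notin:
  "m \<notin> set xs \<Longrightarrow> no_cyclic_succession m xs \<longleftrightarrow> no_succession xs"
  unfolding no_cyclic_succession_def no_succession_def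
  by (intro successively_cong) (auto simp: cyc_succ_def)

lemma no_cyclic_succession_iff_if_one_notin_tl:
  "set xs \<subseteq> {1..m} \<Longrightarrow> 1 \<notin> set (tl xs) \<Longrightarrow> no_cyclic_succession m xs \<longleftrightarrow> no_succession xs"
proof (induction xs)
  case (Cons x xs)
  then have "1 \<notin> set (tl xs)" by (cases xs) auto
  moreover have "hd xs \<noteq> cyc_succ m x \<longleftrightarrow> hd xs \<noteq> Suc x" if "xs \<noteq> []"
    using Cons.prems that by (cases xs) (auto simp: cyc_succ_def)
  ultimately show ?case
    using Cons by (auto simp: no_cyclic_succession_def no_succession_def successively_Cons)
qed (simp add: no_cyclic_succession_def no_succession_def)

definition cyc_avoiders :: "nat \<Rightarrow> nat list set" where
  "cyc_avoiders m = {xs. linear_arrangement m xs \<and> no_cyclic_succession m xs}"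

definition lin_avoiders :: "nat \<Rightarrow> nat list set" where
  "lin_avoiders m = {xs. linear_arrangement m xs \<and> no_succession xs \<and> last xs \<noteq> m}"

definition cyc_avoiders_ending :: "nat \<Rightarrow> nat \<Rightarrow> nat list set" where
  "cyc_avoiders_ending m c = {xs \<in> cyc_avoiders m. last xs = c}"

lemma finite_cyc_avoiders: "finite (cyc_avoiders m)"
  by (rule finite_subset[OF _ finite_linear_arrangements]) (auto simp: cyc_avoiders_def)

lemma finite_lin_avoiders: "finite (lin_avoiders m)"
  by (rule finite_subset[OF _ finite_linear_arrangements]) (auto simp: lin_avoiders_def)

lemma cyc_avoiders_one: "cyc_avoiders 1 = {[1]}"
  unfolding cyc_avoiders_def linear_arrangement_one_iff by (auto simp: no_cyclic_succession_def)

lemma lin_avoiders_one: "lin_avoiders 1 = {}"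
  unfolding lin_avoiders_def linear_arrangement_one_iff by auto

lemma forbidden_patterns_iff_cyc_succ:
  "a \<in> {1..m} \<Longrightarrow> (a, b) \<in> forbidden_patterns m \<longleftrightarrow> b = cyc_succ m a"
  by (auto simp: forbidden_patterns_def cyc_succ_def)

lemma D_eq_card_cyc_avoiders:
  assumes "m \<ge> 1"
  shows "D m = card (cyc_avoiders m)"
proof -
  have "(\<forall>(i, j) \<in> forbidden_patterns m. \<not> contains_pattern xs i j) \<longleftrightarrow> no_cyclic_succession m xs"
    if "linear_arrangement m xs" for xs
    using that unfolding avoids_patterns_iff_successively no_cyclic_succession_def
    by (intro successively_cong) (auto simp: linear_arrangement_def forbidden_patterns_iff_cyc_succ)
  then show ?thesis
    using assms by (auto simp: D_def cyc_avoiders_def intro!: arg_cong[where f = card])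
qed

lemma map_cyc_succ_in_cyc_avoiders:
  assumes "m \<ge> 1" "xs \<in> cyc_avoiders m"
  shows "map (cyc_succ m) xs \<in> cyc_avoiders m"
proof -
  have xs: "distinct xs" "set xs = {1..m}" "no_cyclic_succession m xs"
    using assms(2) by (auto simp: cyc_avoiders_def linear_arrangement_def)
  have "linear_arrangement m (map (cyc_succ m) xs)"
    using xs inj_on_cyc_succ cyc_succ_image[OF assms(1)]
    by (auto simp: linear_arrangement_def distinct_map)
  moreover have "cyc_succ m y \<noteq> cyc_succ m (cyc_succ m x)"
    if "x \<in> set xs" "y \<in> set xs" "y \<noteq> cyc_succ m x" for x y
    using that xs(2) cyc_succ_image[OF assms(1)] inj_onD[OF inj_on_cyc_succ] by (metis imageI)
  then have "no_cyclic_succession m (map (cyc_succ m) xs)"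
    using xs(3) unfolding no_cyclic_succession_def successively_map
    by (auto elim: successively_mono)
  ultimately show ?thesis by (simp add: cyc_avoiders_def)
qed

lemma card_cyc_avoiders_ending_le:
  assumes "m \<ge> 1"
  shows "card (cyc_avoiders_ending m c) \<le> card (cyc_avoiders_ending m (cyc_succ m c))"
proof (rule card_inj_on_le)
  show "inj_on (map (cyc_succ m)) (cyc_avoiders_ending m c)"
    by (rule inj_on_mapI, rule inj_on_subset[OF inj_on_cyc_succ])
       (auto simp: cyc_avoiders_ending_def cyc_avoiders_def linear_arrangement_def)
  have "xs \<noteq> []" if "xs \<in> cyc_avoiders m" for xs
    using that assms by (auto simp: cyc_avoiders_def linear_arrangement_def)
  then show "map (cyc_succ m) ` cyc_avoiders_ending m c \<subseteq> cyc_avoiders_ending m (cyc_succ m c)"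
    using map_cyc_succ_in_cyc_avoiders[OF assms] by (auto simp: cyc_avoiders_ending_def last_map)
qed (simp add: cyc_avoiders_ending_def finite_cyc_avoiders)

lemma card_cyc_avoiders_ending_eq:
  assumes "m \<ge> 1" "c \<in> {1..m}"
  shows "card (cyc_avoiders_ending m c) = card (cyc_avoiders_ending m m)"
proof -
  define f where "f c = card (cyc_avoiders_ending m c)" for c
  have step: "f n \<le> f (Suc n)" if "n \<in> {1..<m}" for n
    using that card_cyc_avoiders_ending_le[OF assms(1), of n] by (simp add: f_def cyc_succ_def)
  have "f 1 \<le> f c" "f c \<le> f m"
    using assms(2) by (auto intro!: lift_Suc_mono_le_ivl[of "{1..<m}" f, OF step])
  moreover have "f m \<le> f 1" \<comment> \<open>closes the cycle \<open>1 \<rightarrow> 2 \<rightarrow> \<dots> \<rightarrow> m \<rightarrow> 1\<close>\<close>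
    using card_cyc_avoiders_ending_le[OF assms(1), of m] by (simp add: f_def cyc_succ_def)
  ultimately show ?thesis by (simp add: f_def)
qed

lemma card_cyc_avoiders:
  assumes "m \<ge> 1"
  shows "card (cyc_avoiders m) = m * card (cyc_avoiders_ending m m)"
proof -
  have "last xs \<in> {1..m}" if "xs \<in> cyc_avoiders m" for xs
    using that assms last_in_linear_arrangement unfolding cyc_avoiders_def by blast
  then have "cyc_avoiders m = (\<Union>c\<in>{1..m}. cyc_avoiders_ending m c)"
    by (auto simp: cyc_avoiders_ending_def)
  then have "card (cyc_avoiders m) = (\<Sum>c\<in>{1..m}. card (cyc_avoiders_ending m c))"
    by (simp only:) (rule card_UN_disjoint; auto simp: cyc_avoiders_ending_def finite_cyc_avoiders)
  also have "\<dots> = (\<Sum>c\<in>{1..m}. card (cyc_avoiders_ending m m))"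
    using card_cyc_avoiders_ending_eq[OF assms] by (rule sum.cong[OF refl])
  finally show ?thesis by simp
qed

lemma snoc_max_cyc_avoiders_iff:
  assumes "k \<ge> 1"
  shows "u @ [Suc k] \<in> cyc_avoiders (Suc k) \<longleftrightarrow> u \<in> lin_avoiders k"
proof -
  have "no_cyclic_succession (Suc k) (u @ [Suc k]) \<longleftrightarrow> no_succession u \<and> last u \<noteq> k"
    if la: "linear_arrangement k u"
  proof -
    have "u \<noteq> []" "last u \<in> {1..k}" "Suc k \<notin> set u"
      using la assms last_in_linear_arrangement by (auto simp: linear_arrangement_def)
    then have "no_cyclic_succession (Suc k) (u @ [Suc k]) \<longleftrightarrow>
        no_cyclic_succession (Suc k) u \<and> Suc k \<noteq> cyc_succ (Suc k) (last u)"
      by (simp add: no_cyclic_succession_def successively_append_iff)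
    with \<open>last u \<in> {1..k}\<close> \<open>Suc k \<notin> set u\<close> show ?thesis
      by (auto simp: no_cyclic_succession_iff_if_max_notin cyc_succ_def)
  qed
  then show ?thesis
    using linear_arrangement_insert_max[of k u "[]"]
    by (auto simp: cyc_avoiders_def lin_avoiders_def)
qed

lemma card_cyc_avoiders_ending_max:
  assumes "k \<ge> 1"
  shows "card (cyc_avoiders_ending (Suc k) (Suc k)) = card (lin_avoiders k)"
proof -
  have "xs = butlast xs @ [Suc k]" if "xs \<in> cyc_avoiders_ending (Suc k) (Suc k)" for xs
    using that append_butlast_last_id[of xs]
    by (fastforce simp: cyc_avoiders_ending_def cyc_avoiders_def linear_arrangement_def)
  then have "cyc_avoiders_ending (Suc k) (Suc k) = (\<lambda>u. u @ [Suc k]) ` lin_avoiders k"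
    using snoc_max_cyc_avoiders_iff[OF assms]
    by (fastforce simp: cyc_avoiders_ending_def image_iff)
  then show ?thesis by (simp add: card_image inj_on_def)
qed

lemma cyc_avoiders_diff_lin_avoiders:
  "cyc_avoiders m - lin_avoiders m = cyc_avoiders_ending m m"
  using no_cyclic_succession_imp_no_succession
  by (auto simp: cyc_avoiders_def lin_avoiders_def cyc_avoiders_ending_def linear_arrangement_def)

lemma insert_max_before_one_lin_avoiders_iff:
  assumes "k \<ge> 1"
  shows "us @ Suc k # 1 # vs \<in> lin_avoiders (Suc k) \<longleftrightarrow> us @ 1 # vs \<in> cyc_avoiders k"
proof -
  have "no_succession (us @ Suc k # 1 # vs) \<and> last (us @ Suc k # 1 # vs) \<noteq> Suc k \<longleftrightarrow>
      no_cyclic_succession k (us @ 1 # vs)"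
    if la: "linear_arrangement k (us @ 1 # vs)"
  proof -
    have sets: "set us \<subseteq> {1..k}" "set (1 # vs) \<subseteq> {1..k}" "1 \<notin> set us" "1 \<notin> set vs"
      using la by (auto simp: linear_arrangement_def)
    then have max: "Suc k \<notin> set (1 # vs)"
      by auto
    have "1 \<notin> set (tl us)"
      using sets(3) by (cases us) auto
    then have "no_cyclic_succession k us \<longleftrightarrow> no_succession us"
      "no_cyclic_succession k (1 # vs) \<longleftrightarrow> no_succession (1 # vs)"
      using no_cyclic_succession_iff_if_one_notin_tl[OF sets(1)]
        no_cyclic_succession_iff_if_one_notin_tl[OF sets(2)] sets(4) by simp_all
    moreover have "last us \<noteq> k \<longleftrightarrow> 1 \<noteq> cyc_succ k (last us)" if "us \<noteq> []"
      using that sets(1) last_in_set[of us] by (fastforce simp: cyc_succ_def)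
    moreover have "last (us @ Suc k # 1 # vs) \<in> set (1 # vs)"
      by simp
    ultimately show ?thesis
      using max by (auto simp: no_succession_def no_cyclic_succession_def successively_append_iff)
  qed
  then show ?thesis
    using linear_arrangement_insert_max[of k us "1 # vs"]
    by (auto simp: lin_avoiders_def cyc_avoiders_def)
qed

lemma lin_avoiders_diff_cyc_avoiders:
  assumes "k \<ge> 1"
  shows "lin_avoiders (Suc k) - cyc_avoiders (Suc k) = insert_before (Suc k) 1 ` cyc_avoiders k"
proof (intro equalityI subsetI)
  fix xs assume xs: "xs \<in> lin_avoiders (Suc k) - cyc_avoiders (Suc k)"
  then have "\<not> successively (\<lambda>i j. j \<noteq> cyc_succ (Suc k) i) xs"
    by (auto simp: lin_avoiders_def cyc_avoiders_def no_cyclic_succession_def)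
  then obtain us a b vs where split: "xs = us @ a # b # vs" "b = cyc_succ (Suc k) a"
    by (auto dest!: not_successively_split)
  moreover have "b \<noteq> Suc a"
    using xs unfolding split(1)
    by (auto simp: lin_avoiders_def no_succession_def successively_append_iff)
  ultimately have "xs = us @ Suc k # 1 # vs"
    by (auto simp: cyc_succ_def split: if_splits)
  moreover have "1 \<notin> set us" "1 \<notin> set vs"
    using xs unfolding \<open>xs = us @ Suc k # 1 # vs\<close>
    by (auto simp: lin_avoiders_def linear_arrangement_def)
  ultimately show "xs \<in> insert_before (Suc k) 1 ` cyc_avoiders k"
    using xs insert_max_before_one_lin_avoiders_iff[OF assms, of us vs] insert_before_split[of 1 us vs "Suc k"]
    by (auto intro!: image_eqI[where x = "us @ 1 # vs"])
next
  fix xs assume "xs \<in> insert_before (Suc k) 1 ` cyc_avoiders k"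
  then obtain u where u: "u \<in> cyc_avoiders k" "xs = insert_before (Suc k) 1 u"
    by blast
  then have "1 \<in> set u" "distinct u"
    using assms by (auto simp: cyc_avoiders_def linear_arrangement_def)
  then obtain us vs where "u = us @ 1 # vs" "1 \<notin> set us" "1 \<notin> set vs"
    by (auto dest: split_list)
  moreover have "us @ Suc k # 1 # vs \<notin> cyc_avoiders (Suc k)"
    by (simp add: cyc_avoiders_def no_cyclic_succession_def successively_append_iff cyc_succ_def)
  ultimately show "xs \<in> lin_avoiders (Suc k) - cyc_avoiders (Suc k)"
    using u insert_max_before_one_lin_avoiders_iff[OF assms, of us vs] insert_before_split[of 1 us vs "Suc k"]
    by simp
qed

lemma card_lin_avoiders_diff_cyc_avoiders:
  assumes "k \<ge> 1"
  shows "card (lin_avoiders (Suc k) - cyc_avoiders (Suc k)) = card (cyc_avoiders k)"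
proof -
  have "removeAll (Suc k) (insert_before (Suc k) 1 u) = u" if "u \<in> cyc_avoiders k" for u
    using that assms removeAll_insert_before[of "Suc k" 1 u]
    by (auto simp: cyc_avoiders_def linear_arrangement_def)
  then have "inj_on (insert_before (Suc k) 1) (cyc_avoiders k)"
    by (rule inj_on_inverseI)
  then show ?thesis
    by (simp add: lin_avoiders_diff_cyc_avoiders[OF assms] card_image)
qed

lemma card_avoiders_recurrence:
  assumes "k \<ge> 1"
  shows "card (lin_avoiders (Suc k)) + card (lin_avoiders k) =
    card (cyc_avoiders (Suc k)) + card (cyc_avoiders k)"
proof -
  let ?L = "lin_avoiders (Suc k)" and ?C = "cyc_avoiders (Suc k)"
  have "card ?L = card (?L \<inter> ?C) + card (cyc_avoiders k)"
    using card_Int_Diff[OF finite_lin_avoiders, of "Suc k" ?C]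
      card_lin_avoiders_diff_cyc_avoiders[OF assms]
    by simp
  moreover have "card ?C = card (?L \<inter> ?C) + card (lin_avoiders k)"
    using card_Int_Diff[OF finite_cyc_avoiders, of "Suc k" ?L] cyc_avoiders_diff_lin_avoiders
      card_cyc_avoiders_ending_max[OF assms]
    by (simp add: Int_commute)
  ultimately show ?thesis by simp
qed

lemma card_lin_avoiders:
  assumes "m \<ge> 1"
  shows "int (card (lin_avoiders m)) = int (card (cyc_avoiders m)) + (-1) ^ m"
  using assms
proof (induction m rule: dec_induct)
  case base
  show ?case unfolding lin_avoiders_one cyc_avoiders_one by simp
next
  case (step k)
  then show ?case using card_avoiders_recurrence[of k] by simp
qed

theorem corollary3p2:
  fixes n :: nat
  assumes "n \<ge> 1"
  shows "int (D n) = int n * (int (D (n - 1)) + (-1) ^ (n - 1))"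
proof (cases "n = 1")
  case True
  have "D 1 = 1"
    using D_eq_card_cyc_avoiders[of 1] unfolding cyc_avoiders_one by simp
  with True show ?thesis
    by (simp add: D_def)
next
  case False
  define k where "k = n - 1"
  have n: "n = Suc k" and k: "k \<ge> 1"
    using assms False by (simp_all add: k_def)
  have "D n = n * card (lin_avoiders k)"
    using D_eq_card_cyc_avoiders[OF assms] card_cyc_avoiders[OF assms]
      card_cyc_avoiders_ending_max[OF k] n by simp
  moreover have "int (card (lin_avoiders k)) = int (D (n - 1)) + (-1) ^ (n - 1)"
    using card_lin_avoiders[OF k] D_eq_card_cyc_avoiders[OF k] n by simp
  ultimately show ?thesis by simp
qed

end
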